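(* Let $\mathcal{B}$ and $\mathcal{A}_{i_1},\mathcal{A}_{i_1,i_2},\dots,\mathcal{A}_{i_1,\dots,i_m}$ (indices in $\{1,\dots,n\}$) be non-random Hermitian tensors of a common shape, and let $\beta_1,\dots,\beta_n$ be independent symmetric Bernoulli random variables, $\mathrm{Pr}(\beta_i=1)=\mathrm{Pr}(\beta_i=-1)=\frac12$. Then $$\mathrm{Pr}\Big(\Big\|\mathcal{B}+\sum_{j=1}^m\sum_{1\le i_1\neq i_2\neq\cdots\neq i_j\le n}\mathcal{A}_{i_1,\dots,i_j}\beta_{i_1}\cdots\beta_{i_j}\Big\|_{(k)}\ge\|\mathcal{B}\|_{(k)}\Big)\ge C_m,$$ where $C_m$ is a constant depending on $\mathcal{A}_{i_1},\mathcal{A}_{i_1,i_2},\dots,\mathcal{A}_{i_1,\dots,i_m}$ but independent of $\mathcal{B}$.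
   Context: Singular values of a tensor are those of its unfolded matrix (identify multi-indices with single indices by a fixed bijection); $\|\mathcal{T}\|_{(k)}$ is the Ky Fan $k$-norm, the sum of the $k$ largest singular values. The inner sum ranges over indices $i_1,\dots,i_j\in\{1,\dots,n\}$ that are pairwise distinct. *)

theory Defs
  imports "Jordan_Normal_Form.Schur_Decomposition" "HOL-Probability.Product_PMF"
begin

text \<open>A (complex) tensor of shape I_1 x ... x I_N x I_1 x ... x I_N, with dims = [I_1,...,I_N],
  is represented by its entry function: T xs ys is the entry at multi-index (xs, ys),
  where xs, ys are lists of length N with xs!l < I_l (0-based indices).\<close>
type_synonym ctensor = "nat list \<Rightarrow> nat list \<Rightarrow> complex"

definition multi_idx :: "nat list \<Rightarrow> nat list set" where
  "multi_idx dims = {xs. length xs = length dims \<and> (\<forall>l<length dims. xs ! l < dims ! l)}"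

definition herm_tensor :: "nat list \<Rightarrow> ctensor \<Rightarrow> bool" where
  "herm_tensor dims T \<longleftrightarrow>
     (\<forall>xs\<in>multi_idx dims. \<forall>ys\<in>multi_idx dims. T xs ys = cnj (T ys xs))"

text \<open>Fixed bijection {0..<prod_list dims} -> multi_idx dims (row-major / mixed radix).\<close>
fun mi_decode :: "nat list \<Rightarrow> nat \<Rightarrow> nat list" where
  "mi_decode [] r = []"
| "mi_decode (d # ds) r = (r div prod_list ds) # mi_decode ds (r mod prod_list ds)"

definition unfold_tensor :: "nat list \<Rightarrow> ctensor \<Rightarrow> complex mat" where
  "unfold_tensor dims T =
     Matrix.mat (prod_list dims) (prod_list dims) (\<lambda>(r, c). T (mi_decode dims r) (mi_decode dims c))"

definition singular_values :: "complex mat \<Rightarrow> real list" where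
  "singular_values M =
     rev (sorted_list_of_multiset
       (image_mset (\<lambda>z. sqrt (Re z)) (proots (char_poly (mat_adjoint M * M)))))"

definition ky_fan_mat :: "nat \<Rightarrow> complex mat \<Rightarrow> real" where
  "ky_fan_mat k M = sum_list (take k (singular_values M))"

definition ky_fan :: "nat \<Rightarrow> nat list \<Rightarrow> ctensor \<Rightarrow> real" where
  "ky_fan k dims T = ky_fan_mat k (unfold_tensor dims T)"

definition bernoulli_signs :: "nat \<Rightarrow> (nat \<Rightarrow> real) pmf" where
  "bernoulli_signs n = Pi_pmf {1..n} 0 (\<lambda>_. pmf_of_set {-1, 1})"

definition distinct_tuples :: "nat \<Rightarrow> nat \<Rightarrow> nat list set" where
  "distinct_tuples n j = {is. length is = j \<and> set is \<subseteq> {1..n} \<and> distinct is}"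

definition chaos :: "nat \<Rightarrow> nat \<Rightarrow> ctensor \<Rightarrow> (nat list \<Rightarrow> ctensor) \<Rightarrow> (nat \<Rightarrow> real) \<Rightarrow> ctensor" where
  "chaos n m B A \<beta> = (\<lambda>xs ys. B xs ys +
      (\<Sum>j\<in>{1..m}. \<Sum>is\<in>distinct_tuples n j.
          complex_of_real (prod_list (map \<beta> is)) * A is xs ys))"

end

(*
  For Hermitian M with eigenvalues ordered by modulus, the Ky Fan k-norm is the sum of the k
  largest |eigenvalues|, and it is the maximum of the real-linear functionals
  M \<mapsto> \<Sum>i<k. \<epsilon>_i Re <v_i, M v_i> over orthonormal v_i and |\<epsilon>_i| \<le> 1; for M = unfold B the
  maximum is attained at an eigenbasis of B with \<epsilon>_i the signs of the eigenvalues.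
  Every chaos monomial \<beta>_{i_1}...\<beta>_{i_j} with distinct indices averages to zero over the 2^n
  sign vectors, so the chaos averages to B and so does the value of this functional.
  Hence some sign vector gives ||B + chaos||_(k) \<ge> functional \<ge> ||B||_(k), and as each
  sign vector has probability 2^-n one may take C = 2^-n.
*)
theory Submission
  imports Defs
begin

section \<open>Adjoints, Hermitian and unitary matrices\<close>

lemma mat_adjoint_dim [simp]:
  "dim_row (mat_adjoint A) = dim_col A" "dim_col (mat_adjoint A) = dim_row A"
  by (simp_all add: mat_adjoint_def)

lemma mat_adjoint_carrier [simp]: "A \<in> carrier_mat n m \<Longrightarrow> mat_adjoint A \<in> carrier_mat m n"
  unfolding carrier_mat_def by simp

lemma index_mat_adjoint [simp]:
  "i < dim_col A \<Longrightarrow> j < dim_row A \<Longrightarrow> mat_adjoint A $$ (i, j) = cnj (A $$ (j, i))"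
  by (simp add: mat_adjoint_def mat_of_rows_def)

lemma mat_adjoint_adjoint [simp]: "mat_adjoint (mat_adjoint A) = (A :: complex mat)"
  by (rule eq_matI) auto

lemma mat_adjoint_one [simp]: "mat_adjoint (1\<^sub>m n) = (1\<^sub>m n :: complex mat)"
  by (rule eq_matI) auto

lemma mat_adjoint_mult:
  fixes A B :: "complex mat"
  assumes "A \<in> carrier_mat n m" "B \<in> carrier_mat m p"
  shows "mat_adjoint (A * B) = mat_adjoint B * mat_adjoint A"
proof (rule eq_matI)
  fix i j assume "i < dim_row (mat_adjoint B * mat_adjoint A)" "j < dim_col (mat_adjoint B * mat_adjoint A)"
  with assms show "mat_adjoint (A * B) $$ (i, j) = (mat_adjoint B * mat_adjoint A) $$ (i, j)"
    by (simp add: scalar_prod_def cnj_sum mult.commute)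
qed (use assms in auto)

lemma mat_adjoint_four_block_diag_mat:
  fixes A D :: "complex mat"
  assumes "A \<in> carrier_mat n1 n1" "D \<in> carrier_mat n2 n2"
  shows "mat_adjoint (four_block_mat A (0\<^sub>m n1 n2) (0\<^sub>m n2 n1) D) =
    four_block_mat (mat_adjoint A) (0\<^sub>m n1 n2) (0\<^sub>m n2 n1) (mat_adjoint D)"
  using assms by (intro eq_matI) (auto simp: four_block_mat_def)

lemma mult_four_block_diag_mat:
  assumes "A1 \<in> carrier_mat n1 n1" "A2 \<in> carrier_mat n1 n1" "D1 \<in> carrier_mat n2 n2" "D2 \<in> carrier_mat n2 n2"
  shows "four_block_mat A1 (0\<^sub>m n1 n2) (0\<^sub>m n2 n1) D1 * four_block_mat A2 (0\<^sub>m n1 n2) (0\<^sub>m n2 n1) D2 =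
    four_block_mat (A1 * A2) (0\<^sub>m n1 n2) (0\<^sub>m n2 n1) (D1 * D2)"
  using assms by (subst mult_four_block_mat[of _ n1 n1 _ n2 _ n2 _ _ n1 _ n2]) auto

definition hermitian_mat :: "complex mat \<Rightarrow> bool" where
  "hermitian_mat A \<longleftrightarrow> mat_adjoint A = A"

definition unitary_mat :: "nat \<Rightarrow> complex mat \<Rightarrow> bool" where
  "unitary_mat n U \<longleftrightarrow> U \<in> carrier_mat n n \<and> mat_adjoint U * U = 1\<^sub>m n"

lemma unitary_mat_carrier: "unitary_mat n U \<Longrightarrow> U \<in> carrier_mat n n"
  by (simp add: unitary_mat_def)

lemma unitary_mat_right_inverse: "unitary_mat n U \<Longrightarrow> U * mat_adjoint U = 1\<^sub>m n"
  unfolding unitary_mat_def using mat_mult_left_right_inverse[of "mat_adjoint U" n U] by auto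

lemma unitary_mat_cancel_left:
  assumes "unitary_mat n U" "Z \<in> carrier_mat n m"
  shows "U * (mat_adjoint U * Z) = Z"
  using assms unitary_mat_carrier[OF assms(1)] unitary_mat_right_inverse[OF assms(1)]
  by (simp add: assoc_mult_mat[symmetric, of U n n _ n _ m])

lemma unitary_mat_adjoint: "unitary_mat n U \<Longrightarrow> unitary_mat n (mat_adjoint U)"
  using unitary_mat_right_inverse[of n U] unfolding unitary_mat_def by auto

lemma unitary_mat_mult:
  assumes U: "unitary_mat n U" and V: "unitary_mat n V"
  shows "unitary_mat n (U * V)"
proof -
  have c: "U \<in> carrier_mat n n" "V \<in> carrier_mat n n"
    using U V by (simp_all add: unitary_mat_carrier)
  have "mat_adjoint (U * V) * (U * V) = mat_adjoint V * ((mat_adjoint U * U) * V)"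
    using c by (simp add: mat_adjoint_mult assoc_mult_mat[of _ n n _ n _ n])
  also have "\<dots> = 1\<^sub>m n"
    using U V c unfolding unitary_mat_def by simp
  finally show ?thesis using c unfolding unitary_mat_def by simp
qed

lemma unitary_mat_four_block_diag:
  assumes U1: "unitary_mat n1 U1" and U2: "unitary_mat n2 U2"
  shows "unitary_mat (n1 + n2) (four_block_mat U1 (0\<^sub>m n1 n2) (0\<^sub>m n2 n1) U2)"
proof -
  have c: "U1 \<in> carrier_mat n1 n1" "U2 \<in> carrier_mat n2 n2"
    using U1 U2 by (simp_all add: unitary_mat_carrier)
  have "mat_adjoint (four_block_mat U1 (0\<^sub>m n1 n2) (0\<^sub>m n2 n1) U2) * four_block_mat U1 (0\<^sub>m n1 n2) (0\<^sub>m n2 n1) U2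
      = four_block_mat (mat_adjoint U1 * U1) (0\<^sub>m n1 n2) (0\<^sub>m n2 n1) (mat_adjoint U2 * U2)"
    using c by (simp add: mat_adjoint_four_block_diag_mat mult_four_block_diag_mat)
  thus ?thesis using U1 U2 c unfolding unitary_mat_def by simp
qed

lemma unitary_mat_of_cols:
  assumes ws: "set ws \<subseteq> carrier_vec n" "length ws = n"
    and orthonormal: "\<And>i j. i < n \<Longrightarrow> j < n \<Longrightarrow> ws ! i \<bullet>c ws ! j = (if i = j then 1 else 0)"
  shows "unitary_mat n (mat_of_cols n ws)"
  unfolding unitary_mat_def
proof (intro conjI eq_matI)
  fix i j assume "i < dim_row (1\<^sub>m n :: complex mat)" "j < dim_col (1\<^sub>m n :: complex mat)"
  hence ij: "i < n" "j < n" by simp_all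
  hence "ws ! i \<in> carrier_vec n" "ws ! j \<in> carrier_vec n" using ws by auto
  hence "(mat_adjoint (mat_of_cols n ws) * mat_of_cols n ws) $$ (i, j) = ws ! j \<bullet>c ws ! i"
    using ij ws by (auto simp: scalar_prod_def mat_of_cols_def mult.commute intro: sum.cong)
  thus "(mat_adjoint (mat_of_cols n ws) * mat_of_cols n ws) $$ (i, j) = 1\<^sub>m n $$ (i, j)"
    using ij orthonormal[of j i] by auto
qed (use ws in auto)

lemma hermitian_mat_congruence:
  assumes "M \<in> carrier_mat n n" "U \<in> carrier_mat n m" "hermitian_mat M"
  shows "hermitian_mat (mat_adjoint U * M * U)"
  using assms unfolding hermitian_mat_def
  by (simp add: mat_adjoint_mult[of _ m n _ m] mat_adjoint_mult[of _ n n _ m] assoc_mult_mat[of _ m n _ n _ m])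

lemma char_poly_unitary_congruence:
  assumes "unitary_mat n U" "M \<in> carrier_mat n n"
  shows "char_poly (mat_adjoint U * M * U) = char_poly M"
proof (rule char_poly_similar, rule similar_matI)
  show "{mat_adjoint U * M * U, M, mat_adjoint U, U} \<subseteq> carrier_mat n n"
    using assms unitary_mat_carrier[OF assms(1)] by auto
qed (use assms unitary_mat_right_inverse in \<open>auto simp: unitary_mat_def\<close>)

lemma unitary_congruence_mult:
  assumes U: "unitary_mat n U" and X: "X \<in> carrier_mat n n" and Y: "Y \<in> carrier_mat n n"
  shows "mat_adjoint U * (X * Y) * U = (mat_adjoint U * X * U) * (mat_adjoint U * Y * U)"
  using unitary_mat_carrier[OF U] X Y
  by (simp add: assoc_mult_mat[of _ n n _ n _ n] mult_carrier_mat[of _ n n] unitary_mat_cancel_left[OF U, where m = n])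

lemma adjoint_congruence_compose:
  assumes U: "unitary_mat n U" and V: "V \<in> carrier_mat n n" and M: "M \<in> carrier_mat n n"
  shows "mat_adjoint (mat_adjoint U * V) * (mat_adjoint U * M * U) * (mat_adjoint U * V) = mat_adjoint V * M * V"
  using unitary_mat_carrier[OF U] V M
  by (simp add: mat_adjoint_mult[of _ n n _ n] assoc_mult_mat[of _ n n _ n _ n] mult_carrier_mat[of _ n n]
      unitary_mat_cancel_left[OF U, where m = n])

lemma index_adjoint_congruence:
  assumes X: "X \<in> carrier_mat n m" and Y: "Y \<in> carrier_mat n n" and ij: "i < m" "j < m"
  shows "(mat_adjoint X * Y * X) $$ (i, j) = (\<Sum>a<n. \<Sum>b<n. cnj (X $$ (a, i)) * Y $$ (a, b) * X $$ (b, j))"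
proof -
  have "(mat_adjoint X * Y * X) $$ (i, j) = (\<Sum>b<n. (mat_adjoint X * Y) $$ (i, b) * X $$ (b, j))"
    using X Y ij by (simp add: index_mult_mat scalar_prod_def atLeast0LessThan)
  also have "\<dots> = (\<Sum>b<n. (\<Sum>a<n. cnj (X $$ (a, i)) * Y $$ (a, b)) * X $$ (b, j))"
    using X Y ij by (intro sum.cong refl) (simp add: index_mult_mat scalar_prod_def atLeast0LessThan)
  also have "\<dots> = (\<Sum>a<n. \<Sum>b<n. cnj (X $$ (a, i)) * Y $$ (a, b) * X $$ (b, j))"
    unfolding sum_distrib_right by (rule sum.swap)
  finally show ?thesis .
qed

lemma index_mat_diag_congruence:
  assumes "W \<in> carrier_mat n n" "i < n"
  shows "(mat_adjoint W * mat_diag n d * W) $$ (i, i) = (\<Sum>a<n. d a * complex_of_real ((cmod (W $$ (a, i)))\<^sup>2))"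
proof -
  have "(mat_adjoint W * mat_diag n d * W) $$ (i, i) = (\<Sum>a<n. cnj (W $$ (a, i)) * d a * W $$ (a, i))"
    unfolding index_adjoint_congruence[OF assms(1) mat_diag_dim assms(2,2)]
  proof (intro sum.cong refl)
    fix a assume a: "a \<in> {..<n}"
    hence "(\<Sum>b<n. cnj (W $$ (a, i)) * mat_diag n d $$ (a, b) * W $$ (b, i)) =
        (\<Sum>b<n. if b = a then cnj (W $$ (a, i)) * d a * W $$ (a, i) else 0)"
      by (intro sum.cong refl) (auto simp: mat_diag_def)
    thus "(\<Sum>b<n. cnj (W $$ (a, i)) * mat_diag n d $$ (a, b) * W $$ (b, i)) = cnj (W $$ (a, i)) * d a * W $$ (a, i)"
      using a by simp
  qed
  also have "\<dots> = (\<Sum>a<n. d a * complex_of_real ((cmod (W $$ (a, i)))\<^sup>2))"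
    by (intro sum.cong refl) (simp only: complex_norm_square mult_ac)
  finally show ?thesis .
qed

lemma unitary_mat_col_norm:
  assumes "unitary_mat n W" "i < n"
  shows "(\<Sum>a<n. (cmod (W $$ (a, i)))\<^sup>2) = 1"
proof -
  have "complex_of_real (\<Sum>a<n. (cmod (W $$ (a, i)))\<^sup>2) = (mat_adjoint W * 1\<^sub>m n * W) $$ (i, i)"
    using index_mat_diag_congruence[OF unitary_mat_carrier[OF assms(1)] assms(2), of "\<lambda>_. 1"] by simp
  also have "\<dots> = 1" using assms unitary_mat_carrier[OF assms(1)] by (simp add: unitary_mat_def)
  finally show ?thesis by (simp only: of_real_eq_1_iff)
qed

lemma unitary_mat_row_norm:
  assumes "unitary_mat n W" "a < n"
  shows "(\<Sum>i<n. (cmod (W $$ (a, i)))\<^sup>2) = 1"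
  using unitary_mat_col_norm[OF unitary_mat_adjoint[OF assms(1)] assms(2)] assms unitary_mat_carrier[OF assms(1)]
  by simp

lemma unitary_mat_partial_row_norms:
  assumes W: "unitary_mat n W" and j: "j \<le> n"
  shows "\<And>a. a < n \<Longrightarrow> 0 \<le> (\<Sum>i<j. (cmod (W $$ (a, i)))\<^sup>2) \<and> (\<Sum>i<j. (cmod (W $$ (a, i)))\<^sup>2) \<le> 1"
    and "(\<Sum>a<n. \<Sum>i<j. (cmod (W $$ (a, i)))\<^sup>2) = real j"
proof -
  fix a assume "a < n"
  moreover have "(\<Sum>i<j. (cmod (W $$ (a, i)))\<^sup>2) \<le> (\<Sum>i<n. (cmod (W $$ (a, i)))\<^sup>2)"
    using j by (intro sum_mono2) auto
  ultimately show "0 \<le> (\<Sum>i<j. (cmod (W $$ (a, i)))\<^sup>2) \<and> (\<Sum>i<j. (cmod (W $$ (a, i)))\<^sup>2) \<le> 1"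
    using unitary_mat_row_norm[OF W] by (simp add: sum_nonneg)
next
  show "(\<Sum>a<n. \<Sum>i<j. (cmod (W $$ (a, i)))\<^sup>2) = real j"
    using j unitary_mat_col_norm[OF W] by (subst sum.swap) simp
qed

section \<open>The spectral theorem for Hermitian matrices\<close>

definition normalize_vec :: "complex Matrix.vec \<Rightarrow> complex Matrix.vec" where
  "normalize_vec v = complex_of_real (1 / sqrt (Re (v \<bullet>c v))) \<cdot>\<^sub>v v"

lemma cscalar_prod_smult:
  fixes v w :: "complex Matrix.vec"
  assumes "dim_vec v = dim_vec w"
  shows "(a \<cdot>\<^sub>v v) \<bullet>c (b \<cdot>\<^sub>v w) = a * cnj b * (v \<bullet>c w)"
  using assms by (simp add: conjugate_smult_vec)

lemma normalize_vec_unit: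
  fixes v :: "complex Matrix.vec"
  assumes "v \<in> carrier_vec n" "v \<noteq> 0\<^sub>v n"
  shows "normalize_vec v \<bullet>c normalize_vec v = 1"
proof -
  have "v \<bullet>c v > 0" using conjugate_square_greater_0_vec[OF assms(1)] assms(2) by simp
  then obtain r where r: "v \<bullet>c v = complex_of_real r" "r > 0"
    by (metis complex_eq_iff less_complex_def of_real_0 Re_complex_of_real Im_complex_of_real zero_complex.sel)
  have "normalize_vec v \<bullet>c normalize_vec v =
      complex_of_real (1 / sqrt r) * cnj (complex_of_real (1 / sqrt r)) * complex_of_real r"
    unfolding normalize_vec_def cscalar_prod_smult[OF refl] r(1) by simp
  also have "\<dots> = complex_of_real (1 / sqrt r * (1 / sqrt r) * r)"
    by (simp only: complex_cnj_complex_of_real of_real_mult)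
  also have "1 / sqrt r * (1 / sqrt r) * r = 1"
    using r(2) by (simp add: divide_simps)
  finally show ?thesis by simp
qed

lemma normalize_vec_orthogonal:
  fixes v w :: "complex Matrix.vec"
  assumes "dim_vec v = dim_vec w" "v \<bullet>c w = 0"
  shows "normalize_vec v \<bullet>c normalize_vec w = 0"
  unfolding normalize_vec_def cscalar_prod_smult[OF assms(1)] assms(2) by simp

lemma normalize_vec_id: "v \<bullet>c v = 1 \<Longrightarrow> normalize_vec v = v"
  by (simp add: normalize_vec_def)

lemma unitary_mat_with_first_col:
  fixes v :: "complex Matrix.vec"
  assumes v: "v \<in> carrier_vec n" and unit: "v \<bullet>c v = 1"
  obtains W where "unitary_mat n W" "col W 0 = v"
proof -
  interpret cof_vec_space n "TYPE(complex)" .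
  have v0: "v \<noteq> 0\<^sub>v n" using unit v by auto
  hence n: "n \<noteq> 0" using v by auto
  define b where "b = basis_completion v"
  from basis_completion[OF v v0, folded b_def]
  have b: "set b \<subseteq> carrier_vec n" "distinct b" "\<not> lin_dep (set b)" "hd b = v" "length b = n"
    by auto
  then obtain vs where bv: "b = v # vs" using n by (cases b) auto
  define ws0 where "ws0 = gram_schmidt n b"
  from gram_schmidt_result[OF b(1-3) ws0_def] b(5)
  have ws0: "corthogonal ws0" "set ws0 \<subseteq> carrier_vec n" "length ws0 = n" by auto
  have "hd ws0 = v" unfolding ws0_def bv using v by simp
  hence ws0_0: "ws0 ! 0 = v" using ws0(3) n by (cases ws0) auto
  define ws where "ws = map normalize_vec ws0"
  have ws: "set ws \<subseteq> carrier_vec n" "length ws = n"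
    using ws0 by (auto simp: ws_def normalize_vec_def)
  have "ws ! i \<bullet>c ws ! j = (if i = j then 1 else 0)" if ij: "i < n" "j < n" for i j
  proof -
    have c: "ws0 ! i \<in> carrier_vec n" "ws0 ! j \<in> carrier_vec n" using ws0 ij by auto
    have "ws0 ! i \<bullet>c ws0 ! j = 0 \<longleftrightarrow> i \<noteq> j" using corthogonalD[OF ws0(1)] ij ws0(3) by auto
    thus ?thesis unfolding ws_def using ij ws0(3) c
      by (auto intro: normalize_vec_unit normalize_vec_orthogonal)
  qed
  from unitary_mat_of_cols[OF ws this] have "unitary_mat n (mat_of_cols n ws)" .
  moreover have "col (mat_of_cols n ws) 0 = ws ! 0"
    using ws n by (intro col_mat_of_cols) auto
  moreover have "ws ! 0 = v"
    using ws0_0 ws0(3) n normalize_vec_id[OF unit] by (simp add: ws_def)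
  ultimately show ?thesis using that by simp
qed

lemma unit_eigenvector_exists:
  fixes A :: "complex mat"
  assumes A: "A \<in> carrier_mat n n" and e: "eigenvalue A e"
  obtains v where "v \<in> carrier_vec n" "v \<bullet>c v = 1" "A *\<^sub>v v = e \<cdot>\<^sub>v v"
proof -
  obtain w where w: "w \<in> carrier_vec n" "w \<noteq> 0\<^sub>v n" "A *\<^sub>v w = e \<cdot>\<^sub>v w"
    using e A unfolding eigenvalue_def eigenvector_def by auto
  have "A *\<^sub>v normalize_vec w = e \<cdot>\<^sub>v normalize_vec w"
    using A w by (simp add: normalize_vec_def mult_mat_vec smult_smult_assoc mult.commute)
  moreover have "normalize_vec w \<in> carrier_vec n" using w by (simp add: normalize_vec_def)
  ultimately show ?thesis using that normalize_vec_unit[OF w(1,2)] by blast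
qed

lemma col_unitary_congruence_eigenvector:
  assumes W: "unitary_mat n W" "col W 0 = v" and n: "n > 0"
    and M: "M \<in> carrier_mat n n" "M *\<^sub>v v = e \<cdot>\<^sub>v v"
  shows "col (mat_adjoint W * M * W) 0 = e \<cdot>\<^sub>v unit_vec n 0"
proof -
  have Wc: "W \<in> carrier_mat n n" using W(1) by (rule unitary_mat_carrier)
  have v: "v \<in> carrier_vec n" using W(2) Wc by auto
  have "col (mat_adjoint W * M * W) 0 = (mat_adjoint W * M) *\<^sub>v v"
    using Wc M n W(2) by (intro col_mult2[of _ n n, THEN trans]) auto
  also have "\<dots> = mat_adjoint W *\<^sub>v (M *\<^sub>v v)"
    by (rule assoc_mult_mat_vec) (use Wc M v in auto)
  also have "\<dots> = e \<cdot>\<^sub>v (mat_adjoint W *\<^sub>v col W 0)"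
    using Wc M v W(2) by (simp add: mult_mat_vec[of _ n n])
  also have "mat_adjoint W *\<^sub>v col W 0 = col (mat_adjoint W * W) 0"
    using Wc n by (intro col_mult2[symmetric]) auto
  also have "col (mat_adjoint W * W) 0 = unit_vec n 0"
    using W(1) n by (simp add: unitary_mat_def)
  finally show ?thesis .
qed

lemma hermitian_mat_first_col_block:
  assumes A: "A \<in> carrier_mat (Suc n) (Suc n)" "hermitian_mat A"
    and col0: "col A 0 = e \<cdot>\<^sub>v unit_vec (Suc n) 0"
  defines "D \<equiv> Matrix.mat n n (\<lambda>(i, j). A $$ (Suc i, Suc j))"
  shows "A = four_block_mat (Matrix.mat 1 1 (\<lambda>_. e)) (0\<^sub>m 1 n) (0\<^sub>m n 1) D"
    and "hermitian_mat D"
proof -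
  have herm: "A $$ (i, j) = cnj (A $$ (j, i))" if "i < Suc n" "j < Suc n" for i j
    using A that index_mat_adjoint[of i A j] unfolding hermitian_mat_def by auto
  have first_col: "A $$ (i, 0) = (if i = 0 then e else 0)" if "i < Suc n" for i
    using arg_cong[OF col0, of "\<lambda>w. w $ i"] A(1) that by auto
  show "A = four_block_mat (Matrix.mat 1 1 (\<lambda>_. e)) (0\<^sub>m 1 n) (0\<^sub>m n 1) D"
  proof (rule eq_matI)
    fix i j assume "i < dim_row (four_block_mat (Matrix.mat 1 1 (\<lambda>_. e)) (0\<^sub>m 1 n) (0\<^sub>m n 1) D)"
      "j < dim_col (four_block_mat (Matrix.mat 1 1 (\<lambda>_. e)) (0\<^sub>m 1 n) (0\<^sub>m n 1) D)"
    hence ij: "i < Suc n" "j < Suc n" by (simp_all add: D_def)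
    show "A $$ (i, j) = four_block_mat (Matrix.mat 1 1 (\<lambda>_. e)) (0\<^sub>m 1 n) (0\<^sub>m n 1) D $$ (i, j)"
    proof (cases "i = 0 \<or> j = 0")
      case True
      have "A $$ (i, j) = (if i = 0 \<and> j = 0 then e else 0)"
      proof (cases "j = 0")
        case False
        with True have "i = 0" by simp
        thus ?thesis using herm[of 0 j] first_col[of j] ij False by simp
      qed (use first_col ij in simp)
      thus ?thesis using ij by (auto simp: four_block_mat_def D_def)
    qed (use ij in \<open>auto simp: four_block_mat_def D_def\<close>)
  qed (use A in \<open>auto simp: D_def\<close>)
  show "hermitian_mat D"
  proof (unfold hermitian_mat_def, rule eq_matI)
    fix i j assume "i < dim_row D" "j < dim_col D"
    thus "mat_adjoint D $$ (i, j) = D $$ (i, j)"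
      using herm[of "Suc i" "Suc j"] by (simp add: D_def)
  qed (simp_all add: D_def)
qed

lemma mat_diag_Cons:
  "mat_diag (Suc n) (\<lambda>i. (e # es) ! i) =
    four_block_mat (Matrix.mat 1 1 (\<lambda>_. e)) (0\<^sub>m 1 n) (0\<^sub>m n 1) (mat_diag n (\<lambda>i. es ! i))"
  by (rule eq_matI) (auto simp: mat_diag_def four_block_mat_def nth_Cons')

theorem hermitian_mat_unitary_diagonalization:
  assumes "M \<in> carrier_mat n n" "hermitian_mat M" "char_poly M = (\<Prod>e \<leftarrow> es. [:- e, 1:])"
  shows "\<exists>U. unitary_mat n U \<and> mat_adjoint U * M * U = mat_diag n (\<lambda>i. es ! i)"
  using assms
proof (induction es arbitrary: n M)
  case Nil
  hence "n = 0" using degree_monic_char_poly[of M n] by simp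
  with Nil.prems(1) have "mat_adjoint (1\<^sub>m n) * M * 1\<^sub>m n = mat_diag n (\<lambda>i. [] ! i)"
    by (intro eq_matI) (auto simp: mat_diag_def)
  moreover have "unitary_mat n (1\<^sub>m n)" by (simp add: unitary_mat_def)
  ultimately show ?case by blast
next
  case (Cons e es)
  note M = Cons.prems(1) and herm = Cons.prems(2)
  have "n = Suc (length es)"
    using degree_monic_char_poly[OF M] degree_linear_factors[of uminus "e # es"] Cons.prems(3) by simp
  then obtain n1 where n: "n = Suc n1" by blast
  have "eigenvalue M e"
    unfolding eigenvalue_root_char_poly[OF M] Cons.prems(3) by simp
  then obtain v where v: "v \<in> carrier_vec n" "v \<bullet>c v = 1" "M *\<^sub>v v = e \<cdot>\<^sub>v v"
    using unit_eigenvector_exists[OF M] by blast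
  obtain W where W: "unitary_mat n W" "col W 0 = v"
    using unitary_mat_with_first_col[OF v(1,2)] by blast
  have Wc: "W \<in> carrier_mat n n" using W(1) by (rule unitary_mat_carrier)
  define A where "A = mat_adjoint W * M * W"
  have A: "A \<in> carrier_mat (Suc n1) (Suc n1)" "hermitian_mat A"
    using Wc M herm n by (auto simp: A_def hermitian_mat_congruence)
  have "col A 0 = e \<cdot>\<^sub>v unit_vec (Suc n1) 0"
    unfolding A_def using col_unitary_congruence_eigenvector[OF W _ M v(3)] n by simp
  from hermitian_mat_first_col_block[OF A this]
  obtain D where A_block: "A = four_block_mat (Matrix.mat 1 1 (\<lambda>_. e)) (0\<^sub>m 1 n1) (0\<^sub>m n1 1) D"
    and D: "D \<in> carrier_mat n1 n1" "hermitian_mat D" by auto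
  have "char_poly A = [:- e, 1:] * char_poly D"
    unfolding A_block using D(1)
    by (subst char_poly_four_block_zeros_col) (auto simp: char_poly_defs Determinant.det_def sign_def)
  moreover have "char_poly A = [:- e, 1:] * (\<Prod>e \<leftarrow> es. [:- e, 1:])"
    unfolding A_def char_poly_unitary_congruence[OF W(1) M] Cons.prems(3) by simp
  ultimately have "char_poly D = (\<Prod>e \<leftarrow> es. [:- e, 1:])"
    by (metis mult_cancel_left pCons_eq_0_iff zero_neq_one)
  from Cons.IH[OF D this] obtain U' where U': "unitary_mat n1 U'"
    and diag: "mat_adjoint U' * D * U' = mat_diag n1 (\<lambda>i. es ! i)" by blast
  have U'c: "U' \<in> carrier_mat n1 n1" using U' by (rule unitary_mat_carrier)
  define B where "B = four_block_mat (1\<^sub>m 1) (0\<^sub>m 1 n1) (0\<^sub>m n1 1) U'"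
  have B: "unitary_mat n B"
    unfolding B_def n using unitary_mat_four_block_diag[OF _ U', of 1] by (simp add: unitary_mat_def)
  have Bc: "B \<in> carrier_mat n n" using B by (rule unitary_mat_carrier)
  have "mat_adjoint (W * B) * M * (W * B) = mat_adjoint B * A * B"
    using Wc Bc M by (simp add: A_def mat_adjoint_mult[of _ n n _ n] assoc_mult_mat[of _ n n _ n _ n] mult_carrier_mat[of _ n n])
  also have "\<dots> = four_block_mat (Matrix.mat 1 1 (\<lambda>_. e)) (0\<^sub>m 1 n1) (0\<^sub>m n1 1) (mat_adjoint U' * D * U')"
    unfolding A_block B_def using U'c D(1)
    by (simp add: mat_adjoint_four_block_diag_mat mult_four_block_diag_mat[of _ "Suc 0" _ _ n1] mult_carrier_mat[of _ n1 n1])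
  also have "\<dots> = mat_diag n (\<lambda>i. (e # es) ! i)"
    unfolding diag n mat_diag_Cons ..
  finally show ?case using unitary_mat_mult[OF W(1) B] by blast
qed

lemma mat_diag_hermitian_real:
  assumes "hermitian_mat (mat_diag n f)" "i < n"
  shows "f i = complex_of_real (Re (f i))"
proof -
  have "f i = cnj (f i)"
    using arg_cong[OF assms(1)[unfolded hermitian_mat_def], of "\<lambda>A. A $$ (i, i)"] assms(2)
    by (simp add: mat_diag_def)
  thus ?thesis by (metis Reals_cnj_iff complex_is_Real_iff of_real_Re)
qed

theorem hermitian_mat_eigen_decomposition:
  assumes M: "M \<in> carrier_mat n n" "hermitian_mat M"
  obtains U ls where "unitary_mat n U" "length ls = n" "sorted_wrt (\<ge>) (map abs ls)"
    "mat_adjoint U * M * U = mat_diag n (\<lambda>i. complex_of_real (ls ! i))"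
proof -
  obtain as where as: "char_poly M = (\<Prod>a \<leftarrow> as. [:- a, 1:])" "length as = n"
    using char_poly_factorized[OF M(1)] by blast
  define es where "es = sort_key (\<lambda>e. - cmod e) as"
  have "mset es = mset as" by (simp add: es_def)
  hence "char_poly M = (\<Prod>a \<leftarrow> es. [:- a, 1:])" "length es = n"
    using as by (metis mset_map prod_mset_prod_list, metis size_mset)
  then obtain U where U: "unitary_mat n U" and diag: "mat_adjoint U * M * U = mat_diag n (\<lambda>i. es ! i)"
    using hermitian_mat_unitary_diagonalization[OF M] by blast
  have "hermitian_mat (mat_diag n (\<lambda>i. es ! i))"
    unfolding diag[symmetric] using hermitian_mat_congruence[OF M(1) unitary_mat_carrier[OF U] M(2)] .
  hence real: "es ! i = complex_of_real (Re (es ! i))" if "i < n" for i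
    using mat_diag_hermitian_real that by blast
  define ls where "ls = map Re es"
  have "sorted (map (\<lambda>e. - cmod e) es)" by (simp add: es_def)
  hence "sorted_wrt (\<ge>) (map cmod es)" by (simp add: sorted_wrt_map sorted_map)
  moreover have "map cmod es = map abs ls"
    using real \<open>length es = n\<close> by (intro nth_equalityI) (auto simp: ls_def, metis norm_of_real)
  ultimately have "sorted_wrt (\<ge>) (map abs ls)" by simp
  moreover have "mat_adjoint U * M * U = mat_diag n (\<lambda>i. complex_of_real (ls ! i))"
    unfolding diag using real \<open>length es = n\<close> by (auto simp: mat_diag_def ls_def)
  moreover have "length ls = n" using \<open>length es = n\<close> by (simp add: ls_def)
  ultimately show ?thesis using that[OF U] by blast
qed

section \<open>Ky Fan norms of Hermitian matrices\<close>

lemma proots_linear_factors: "proots (\<Prod>a \<leftarrow> as. [:- a, 1:]) = mset (as :: complex list)"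
proof (induction as)
  case (Cons a as)
  have "(\<Prod>a \<leftarrow> as. [:- a, 1:]) \<noteq> 0" by (auto simp: prod_list_zero_iff)
  thus ?case by (simp add: proots_mult Cons.IH del: mult_pCons_left)
qed simp

lemma char_poly_mat_diag: "char_poly (mat_diag n f) = (\<Prod>a \<leftarrow> map f [0..<n]. [:- a, 1:])"
proof -
  have "upper_triangular (mat_diag n f)" by (auto simp: mat_diag_def)
  moreover have "diag_mat (mat_diag n f) = map f [0..<n]"
    by (rule nth_equalityI) (auto simp: mat_diag_def diag_mat_def)
  ultimately show ?thesis by (simp add: char_poly_upper_triangular[of _ n])
qed

theorem singular_values_hermitian:
  assumes M: "M \<in> carrier_mat n n" "hermitian_mat M" and U: "unitary_mat n U"
    and diag: "mat_adjoint U * M * U = mat_diag n (\<lambda>i. complex_of_real (ls ! i))"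
    and ls: "length ls = n" "sorted_wrt (\<ge>) (map abs ls)"
  shows "singular_values M = map abs ls"
proof -
  define f where "f = (\<lambda>i. complex_of_real (ls ! i) * complex_of_real (ls ! i))"
  have "mat_adjoint U * (M * M) * U = mat_diag n f"
    unfolding unitary_congruence_mult[OF U M(1) M(1)] diag by (simp add: f_def)
  hence "char_poly (M * M) = char_poly (mat_diag n f)"
    using char_poly_unitary_congruence[OF U, of "M * M"] M(1) by simp
  hence "char_poly (mat_adjoint M * M) = (\<Prod>a \<leftarrow> map f [0..<n]. [:- a, 1:])"
    using M(2) unfolding hermitian_mat_def char_poly_mat_diag by simp
  hence "proots (char_poly (mat_adjoint M * M)) = mset (map f [0..<n])"
    by (simp only: proots_linear_factors)
  moreover have "map (\<lambda>z. sqrt (Re z)) (map f [0..<n]) = map abs ls"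
    using ls(1) by (intro nth_equalityI) (auto simp: f_def real_sqrt_abs[of "ls ! _", unfolded power2_eq_square])
  ultimately have "singular_values M = rev (sort (map abs ls))"
    unfolding singular_values_def by (metis mset_map sorted_list_of_multiset_mset)
  also have "sort (map abs ls) = rev (map abs ls)"
    using ls(2) by (intro properties_for_sort) (simp_all add: sorted_wrt_rev)
  finally show ?thesis by simp
qed

lemma weighted_sum_le_sum_list_take:
  fixes xs :: "real list" and c :: "nat \<Rightarrow> real"
  assumes sorted: "sorted_wrt (\<ge>) xs" and nonneg: "\<forall>x\<in>set xs. 0 \<le> x"
    and weights: "\<And>j. j < length xs \<Longrightarrow> 0 \<le> c j \<and> c j \<le> 1"
    and total: "(\<Sum>j<length xs. c j) \<le> real k"
  shows "(\<Sum>j<length xs. xs ! j * c j) \<le> sum_list (take k xs)"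
proof (cases "length xs \<le> k")
  case True
  have "(\<Sum>j<length xs. xs ! j * c j) \<le> (\<Sum>j<length xs. xs ! j)"
    using nonneg weights by (intro sum_mono) (simp add: mult_left_le)
  also have "\<dots> = sum_list (take k xs)"
    using True by (simp add: sum_list_sum_nth atLeast0LessThan)
  finally show ?thesis .
next
  case False
  define N where "N = length xs"
  define t where "t = xs ! k"
  have kN: "k < N" using False by (simp add: N_def)
  have t: "0 \<le> t" using nonneg kN by (simp add: t_def N_def)
  have head: "t \<le> xs ! j" if "j < k" for j
    using sorted_wrt_nth_less[OF sorted that] kN by (simp add: t_def N_def)
  have tail: "xs ! j \<le> t" if "k \<le> j" "j < N" for j
    using sorted_wrt_nth_less[OF sorted, of k j] that by (cases "k = j") (auto simp: t_def N_def)
  have split: "(\<Sum>j<N. f j) = (\<Sum>j<k. f j) + (\<Sum>j\<in>{k..<N}. f j)" for f :: "nat \<Rightarrow> real"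
    using kN by (metis atLeast0LessThan less_imp_le_nat sum.atLeastLessThan_concat zero_le)
  have "(\<Sum>j<N. xs ! j * c j) \<le> (\<Sum>j<k. xs ! j * c j) + (\<Sum>j\<in>{k..<N}. t * c j)"
    unfolding split[of "\<lambda>j. xs ! j * c j"] using tail weights
    by (intro add_left_mono sum_mono mult_right_mono) (auto simp: N_def)
  also have "\<dots> \<le> (\<Sum>j<k. xs ! j * c j) + t * (real k - (\<Sum>j<k. c j))"
    using total split[of c] t by (simp add: sum_distrib_left[symmetric] mult_left_mono N_def)
  also have "\<dots> = (\<Sum>j<k. xs ! j * c j + t * (1 - c j))"
    by (simp add: sum.distrib sum_distrib_left sum_subtractf algebra_simps)
  also have "\<dots> \<le> (\<Sum>j<k. xs ! j)"
  proof (rule sum_mono)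
    fix j assume "j \<in> {..<k}"
    hence "t * (1 - c j) \<le> xs ! j * (1 - c j)" using head weights kN by (intro mult_right_mono) (auto simp: N_def)
    thus "xs ! j * c j + t * (1 - c j) \<le> xs ! j" by (simp add: algebra_simps)
  qed
  also have "\<dots> = sum_list (take k xs)"
    using kN by (simp add: sum_list_sum_nth atLeast0LessThan min_def N_def)
  finally show ?thesis by (simp add: N_def)
qed

definition signed_diag_sum :: "nat \<Rightarrow> (nat \<Rightarrow> real) \<Rightarrow> complex mat \<Rightarrow> complex mat \<Rightarrow> real" where
  "signed_diag_sum k \<epsilon> V M = (\<Sum>i<k. \<epsilon> i * Re ((mat_adjoint V * M * V) $$ (i, i)))"

theorem signed_diag_sum_le_ky_fan_mat:
  assumes M: "M \<in> carrier_mat n n" "hermitian_mat M" and V: "unitary_mat n V"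
    and j: "j \<le> k" "j \<le> n" and \<epsilon>: "\<And>i. \<bar>\<epsilon> i\<bar> \<le> 1"
  shows "signed_diag_sum j \<epsilon> V M \<le> ky_fan_mat k M"
proof -
  obtain U ls where U: "unitary_mat n U" and ls: "length ls = n" "sorted_wrt (\<ge>) (map abs ls)"
    and diag: "mat_adjoint U * M * U = mat_diag n (\<lambda>i. complex_of_real (ls ! i))"
    by (rule hermitian_mat_eigen_decomposition[OF M])
  define W where "W = mat_adjoint U * V"
  have W: "unitary_mat n W" unfolding W_def by (intro unitary_mat_mult unitary_mat_adjoint U V)
  define w where "w a i = (cmod (W $$ (a, i)))\<^sup>2" for a i
  have entry: "Re ((mat_adjoint V * M * V) $$ (i, i)) = (\<Sum>a<n. ls ! a * w a i)" if "i < n" for i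
    using index_mat_diag_congruence[OF unitary_mat_carrier[OF W] that, of "\<lambda>a. complex_of_real (ls ! a)"]
    unfolding diag[symmetric] W_def adjoint_congruence_compose[OF U unitary_mat_carrier[OF V] M(1)]
    by (simp add: w_def W_def Re_sum)
  have "signed_diag_sum j \<epsilon> V M = (\<Sum>i<j. \<Sum>a<n. \<epsilon> i * ls ! a * w a i)"
    unfolding signed_diag_sum_def using j by (intro sum.cong refl) (simp add: entry sum_distrib_left mult.assoc)
  also have "\<dots> \<le> (\<Sum>i<j. \<Sum>a<n. \<bar>ls ! a\<bar> * w a i)"
  proof (intro sum_mono mult_right_mono)
    fix i a
    have "\<epsilon> i * ls ! a \<le> \<bar>\<epsilon> i\<bar> * \<bar>ls ! a\<bar>" by (metis abs_ge_self abs_mult)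
    also have "\<dots> \<le> \<bar>ls ! a\<bar>" using \<epsilon>[of i] by (simp add: mult_left_le_one_le)
    finally show "\<epsilon> i * ls ! a \<le> \<bar>ls ! a\<bar>" .
  qed (simp add: w_def)
  also have "\<dots> = (\<Sum>a<length (map abs ls). map abs ls ! a * (\<Sum>i<j. w a i))"
    using ls(1) by (simp add: sum.swap[of _ "{..<j}"] sum_distrib_left)
  also have "\<dots> \<le> sum_list (take k (map abs ls))"
    using unitary_mat_partial_row_norms[OF W j(2)] ls(1) j(1)
    by (intro weighted_sum_le_sum_list_take[OF ls(2)]) (auto simp: w_def)
  also have "\<dots> = ky_fan_mat k M"
    unfolding ky_fan_mat_def singular_values_hermitian[OF M U diag ls] ..
  finally show ?thesis .
qed

theorem ky_fan_mat_eq_signed_diag_sum: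
  assumes M: "M \<in> carrier_mat n n" "hermitian_mat M"
  obtains V \<epsilon> where "unitary_mat n V" "\<And>i. \<bar>\<epsilon> i\<bar> \<le> 1" "signed_diag_sum (min k n) \<epsilon> V M = ky_fan_mat k M"
proof -
  obtain U ls where U: "unitary_mat n U" and ls: "length ls = n" "sorted_wrt (\<ge>) (map abs ls)"
    and diag: "mat_adjoint U * M * U = mat_diag n (\<lambda>i. complex_of_real (ls ! i))"
    by (rule hermitian_mat_eigen_decomposition[OF M])
  define \<epsilon> where "\<epsilon> i = sgn (ls ! i)" for i
  have "signed_diag_sum (min k n) \<epsilon> U M = (\<Sum>i<min k n. \<bar>ls ! i\<bar>)"
    unfolding signed_diag_sum_def diag by (intro sum.cong refl) (simp add: \<epsilon>_def mat_diag_def abs_sgn mult.commute)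
  also have "\<dots> = ky_fan_mat k M"
    unfolding ky_fan_mat_def singular_values_hermitian[OF M U diag ls]
    using ls(1) by (simp add: sum_list_sum_nth atLeast0LessThan min.commute)
  finally show ?thesis by (rule that[OF U, rotated]) (simp add: \<epsilon>_def abs_sgn_eq)
qed

lemma sum_signed_diag_sum:
  assumes V: "V \<in> carrier_mat n n" and j: "j \<le> n" and A: "\<And>x. x \<in> S \<Longrightarrow> A x \<in> carrier_mat n n"
  shows "(\<Sum>x\<in>S. signed_diag_sum j \<epsilon> V (A x)) =
    (\<Sum>i<j. \<epsilon> i * (\<Sum>a<n. \<Sum>b<n. Re (cnj (V $$ (a, i)) * (\<Sum>x\<in>S. A x $$ (a, b)) * V $$ (b, i))))"
proof -
  have "signed_diag_sum j \<epsilon> V (A x) =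
      (\<Sum>i<j. \<epsilon> i * (\<Sum>a<n. \<Sum>b<n. Re (cnj (V $$ (a, i)) * A x $$ (a, b) * V $$ (b, i))))" if "x \<in> S" for x
    unfolding signed_diag_sum_def
  proof (intro sum.cong refl)
    fix i assume "i \<in> {..<j}"
    with j have "i < n" by simp
    thus "\<epsilon> i * Re ((mat_adjoint V * A x * V) $$ (i, i)) =
        \<epsilon> i * (\<Sum>a<n. \<Sum>b<n. Re (cnj (V $$ (a, i)) * A x $$ (a, b) * V $$ (b, i)))"
      unfolding index_adjoint_congruence[OF V A[OF that] \<open>i < n\<close> \<open>i < n\<close>] by (simp add: Re_sum)
  qed
  thus ?thesis
    by (simp add: sum.swap[of _ S] sum_distrib_left sum_distrib_right Re_sum)
qed

theorem exists_ky_fan_mat_ge_of_mean: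
  assumes S: "finite S" "S \<noteq> {}"
    and A: "\<And>x. x \<in> S \<Longrightarrow> A x \<in> carrier_mat n n" "\<And>x. x \<in> S \<Longrightarrow> hermitian_mat (A x)"
    and M: "M \<in> carrier_mat n n" "hermitian_mat M"
    and mean: "\<And>a b. a < n \<Longrightarrow> b < n \<Longrightarrow> (\<Sum>x\<in>S. A x $$ (a, b)) = of_nat (card S) * M $$ (a, b)"
  shows "\<exists>x\<in>S. ky_fan_mat k M \<le> ky_fan_mat k (A x)"
proof -
  obtain V \<epsilon> where V: "unitary_mat n V" and \<epsilon>: "\<And>i. \<bar>\<epsilon> i\<bar> \<le> 1"
    and attained: "signed_diag_sum (min k n) \<epsilon> V M = ky_fan_mat k M"
    using ky_fan_mat_eq_signed_diag_sum[OF M, where k = k] by blast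
  let ?\<Phi> = "signed_diag_sum (min k n) \<epsilon> V"
  have Vc: "V \<in> carrier_mat n n" using V by (rule unitary_mat_carrier)
  have j: "min k n \<le> n" by simp
  have mean': "(\<Sum>x\<in>S. A x $$ (a, b)) = (\<Sum>x\<in>S. M $$ (a, b))" if "a < n" "b < n" for a b
    using mean[OF that] by simp
  have "(\<Sum>x\<in>S. ?\<Phi> (A x)) =
      (\<Sum>i<min k n. \<epsilon> i * (\<Sum>a<n. \<Sum>b<n. Re (cnj (V $$ (a, i)) * (\<Sum>x\<in>S. A x $$ (a, b)) * V $$ (b, i))))"
    by (rule sum_signed_diag_sum[OF Vc j A(1)])
  also have "\<dots> = (\<Sum>i<min k n. \<epsilon> i * (\<Sum>a<n. \<Sum>b<n. Re (cnj (V $$ (a, i)) * (\<Sum>x\<in>S. M $$ (a, b)) * V $$ (b, i))))"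
    by (intro sum.cong refl arg_cong2[where f = "(*)"]) (auto simp: mean')
  also have "\<dots> = (\<Sum>x\<in>S. ?\<Phi> M)"
    by (rule sum_signed_diag_sum[OF Vc j M(1), symmetric])
  finally have "(\<Sum>x\<in>S. ?\<Phi> (A x)) = (\<Sum>x\<in>S. ?\<Phi> M)" .
  then obtain x where x: "x \<in> S" "?\<Phi> M \<le> ?\<Phi> (A x)"
    using sum_strict_mono[OF S, of "\<lambda>x. ?\<Phi> (A x)" "\<lambda>_. ?\<Phi> M"] by force
  moreover have "?\<Phi> (A x) \<le> ky_fan_mat k (A x)"
    by (rule signed_diag_sum_le_ky_fan_mat) (use A x(1) V \<epsilon> in auto)
  ultimately have "ky_fan_mat k M \<le> ky_fan_mat k (A x)" using attained by simp
  thus ?thesis using x(1) by blast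
qed

section \<open>Tensor chaos with Bernoulli signs\<close>

lemma mi_decode_multi_idx: "r < prod_list dims \<Longrightarrow> mi_decode dims r \<in> multi_idx dims"
proof (induction dims arbitrary: r)
  case (Cons d ds)
  hence pos: "0 < prod_list ds" by (metis gr0I mult_0_right not_less_zero prod_list.Cons)
  with Cons.prems have "r div prod_list ds < d"
    by (simp add: div_less_iff_less_mult mult.commute)
  with pos show ?case
    using Cons.IH[of "r mod prod_list ds"] by (auto simp: multi_idx_def nth_Cons split: nat.splits)
qed (simp add: multi_idx_def)

lemma unfold_tensor_carrier: "unfold_tensor dims T \<in> carrier_mat (prod_list dims) (prod_list dims)"
  by (simp add: unfold_tensor_def)

lemma index_unfold_tensor:
  "a < prod_list dims \<Longrightarrow> b < prod_list dims \<Longrightarrow>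
    unfold_tensor dims T $$ (a, b) = T (mi_decode dims a) (mi_decode dims b)"
  by (simp add: unfold_tensor_def)

lemma hermitian_unfold_tensor:
  assumes "herm_tensor dims T"
  shows "hermitian_mat (unfold_tensor dims T)"
  unfolding hermitian_mat_def
proof (rule eq_matI)
  fix a b assume "a < dim_row (unfold_tensor dims T)" "b < dim_col (unfold_tensor dims T)"
  hence ab: "a < prod_list dims" "b < prod_list dims" by (simp_all add: unfold_tensor_def)
  have "T (mi_decode dims a) (mi_decode dims b) = cnj (T (mi_decode dims b) (mi_decode dims a))"
    using assms mi_decode_multi_idx[OF ab(1)] mi_decode_multi_idx[OF ab(2)] unfolding herm_tensor_def by blast
  thus "mat_adjoint (unfold_tensor dims T) $$ (a, b) = unfold_tensor dims T $$ (a, b)"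
    using ab by (simp add: unfold_tensor_def)
qed (simp_all add: unfold_tensor_def)

lemma herm_tensor_chaos:
  assumes "\<And>is. length is \<in> {1..m} \<Longrightarrow> set is \<subseteq> {1..n} \<Longrightarrow> herm_tensor dims (A is)"
    and "herm_tensor dims B"
  shows "herm_tensor dims (chaos n m B A \<beta>)"
  unfolding herm_tensor_def
proof (intro ballI)
  fix xs ys assume xs: "xs \<in> multi_idx dims" and ys: "ys \<in> multi_idx dims"
  have "A is xs ys = cnj (A is ys xs)" if "is \<in> distinct_tuples n j" "j \<in> {1..m}" for j "is"
  proof -
    have "herm_tensor dims (A is)" using assms(1) that by (simp add: distinct_tuples_def)
    thus ?thesis using xs ys unfolding herm_tensor_def by blast
  qed
  moreover have "B xs ys = cnj (B ys xs)" using assms(2) xs ys unfolding herm_tensor_def by blast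
  ultimately show "chaos n m B A \<beta> xs ys = cnj (chaos n m B A \<beta> ys xs)"
    unfolding chaos_def by (simp add: cnj_sum)
qed

lemma set_pmf_bernoulli_signs: "set_pmf (bernoulli_signs n) = PiE_dflt {1..n} 0 (\<lambda>_. {-1, 1})"
  unfolding bernoulli_signs_def by (subst set_Pi_pmf) (auto simp: o_def)

lemma pmf_bernoulli_signs:
  assumes "\<beta> \<in> set_pmf (bernoulli_signs n)"
  shows "pmf (bernoulli_signs n) \<beta> = (1 / 2) ^ n"
proof -
  have \<beta>: "\<forall>i. i \<notin> {1..n} \<longrightarrow> \<beta> i = 0" "\<forall>i\<in>{1..n}. \<beta> i \<in> {-1, 1}"
    using assms unfolding set_pmf_bernoulli_signs PiE_dflt_def by auto
  have "pmf (bernoulli_signs n) \<beta> = (\<Prod>i\<in>{1..n}. pmf (pmf_of_set {-1, 1 :: real}) (\<beta> i))"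
    unfolding bernoulli_signs_def using \<beta>(1) by (subst pmf_Pi) auto
  also have "\<dots> = (\<Prod>i\<in>{1..n}. 1 / 2)"
    using \<beta>(2) by (intro prod.cong refl) auto
  finally show ?thesis by simp
qed

lemma sum_bernoulli_signs_monomial:
  assumes "ix \<noteq> []" "set ix \<subseteq> {1..n}" "distinct ix"
  shows "(\<Sum>\<beta>\<in>set_pmf (bernoulli_signs n). prod_list (map \<beta> ix)) = 0"
proof -
  obtain i0 rest where ix: "ix = i0 # rest" using assms(1) by (cases "ix") auto
  have i0: "i0 \<in> {1..n}" "i0 \<notin> set rest" using assms ix by auto
  define flip where "flip \<beta> = \<beta>(i0 := - \<beta> i0)" for \<beta> :: "nat \<Rightarrow> real"
  have flip: "map (flip \<beta>) rest = map \<beta> rest" "flip \<beta> i0 = - \<beta> i0" for \<beta>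
    using i0(2) by (auto simp: flip_def)
  have "prod_list (map (flip \<beta>) ix) = - prod_list (map \<beta> ix)" for \<beta>
    unfolding ix list.map prod_list.Cons flip by simp
  moreover have "flip \<beta> \<in> set_pmf (bernoulli_signs n)" if "\<beta> \<in> set_pmf (bernoulli_signs n)" for \<beta>
    using that i0(1) unfolding set_pmf_bernoulli_signs PiE_dflt_def flip_def by auto
  moreover have "flip (flip \<beta>) = \<beta>" for \<beta> by (simp add: flip_def)
  ultimately have "(\<Sum>\<beta>\<in>set_pmf (bernoulli_signs n). prod_list (map \<beta> ix)) =
      (\<Sum>\<beta>\<in>set_pmf (bernoulli_signs n). - prod_list (map \<beta> ix))"
    by (intro sum.reindex_bij_witness[of _ flip flip]) auto
  thus ?thesis by (simp add: sum_negf)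
qed

lemma sum_chaos_bernoulli_signs:
  "(\<Sum>\<beta>\<in>set_pmf (bernoulli_signs n). chaos n m B A \<beta> xs ys) =
    of_nat (card (set_pmf (bernoulli_signs n))) * B xs ys"
proof -
  let ?S = "set_pmf (bernoulli_signs n)"
  let ?c = "\<lambda>\<beta> ix. complex_of_real (prod_list (map \<beta> ix)) * A ix xs ys"
  have zero: "(\<Sum>\<beta>\<in>?S. ?c \<beta> ix) = 0" if "ix \<in> distinct_tuples n j" "j \<in> {1..m}" for j ix
    using that sum_bernoulli_signs_monomial[of ix n]
    by (auto simp: distinct_tuples_def Suc_le_eq sum_distrib_right[symmetric] of_real_sum[symmetric] simp del: of_real_sum)
  have "(\<Sum>\<beta>\<in>?S. \<Sum>j\<in>{1..m}. \<Sum>ix\<in>distinct_tuples n j. ?c \<beta> ix) =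
      (\<Sum>j\<in>{1..m}. \<Sum>ix\<in>distinct_tuples n j. \<Sum>\<beta>\<in>?S. ?c \<beta> ix)"
    by (subst sum.swap) (intro sum.cong refl sum.swap)
  also have "\<dots> = 0" using zero by simp
  finally show ?thesis unfolding chaos_def by (simp add: sum.distrib)
qed

theorem exists_bernoulli_signs_ky_fan_ge:
  assumes A: "\<And>ix. length ix \<in> {1..m} \<Longrightarrow> set ix \<subseteq> {1..n} \<Longrightarrow> herm_tensor dims (A ix)"
    and B: "herm_tensor dims B"
  shows "\<exists>\<beta>\<in>set_pmf (bernoulli_signs n). ky_fan k dims B \<le> ky_fan k dims (chaos n m B A \<beta>)"
  unfolding ky_fan_def
proof (rule exists_ky_fan_mat_ge_of_mean)
  let ?S = "set_pmf (bernoulli_signs n)"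
  show "finite ?S" unfolding set_pmf_bernoulli_signs by (rule finite_PiE_dflt) auto
  show "?S \<noteq> {}" by (rule set_pmf_not_empty)
  show "hermitian_mat (unfold_tensor dims (chaos n m B A \<beta>))" for \<beta>
    by (intro hermitian_unfold_tensor herm_tensor_chaos A B)
  show "(\<Sum>\<beta>\<in>?S. unfold_tensor dims (chaos n m B A \<beta>) $$ (a, b)) =
      of_nat (card ?S) * unfold_tensor dims B $$ (a, b)" if "a < prod_list dims" "b < prod_list dims" for a b
    using that by (simp add: index_unfold_tensor sum_chaos_bernoulli_signs)
qed (simp_all add: unfold_tensor_carrier hermitian_unfold_tensor B)

theorem lemma6:
  fixes dims :: "nat list" and n m k :: nat and A :: "nat list \<Rightarrow> ctensor"
  assumes "\<And>is. length is \<in> {1..m} \<Longrightarrow> set is \<subseteq> {1..n} \<Longrightarrow> herm_tensor dims (A is)"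
  shows "\<exists>C>0. \<forall>B. herm_tensor dims B \<longrightarrow>
           measure_pmf.prob (bernoulli_signs n)
             {\<beta>. ky_fan k dims (chaos n m B A \<beta>) \<ge> ky_fan k dims B} \<ge> C"
proof (intro exI[of _ "(1 / 2) ^ n"] conjI allI impI)
  fix B assume B: "herm_tensor dims B"
  let ?E = "{\<beta>. ky_fan k dims (chaos n m B A \<beta>) \<ge> ky_fan k dims B}"
  have "\<exists>\<beta>\<in>set_pmf (bernoulli_signs n). ky_fan k dims B \<le> ky_fan k dims (chaos n m B A \<beta>)"
    by (rule exists_bernoulli_signs_ky_fan_ge) (use assms B in auto)
  then obtain \<beta> where \<beta>: "\<beta> \<in> set_pmf (bernoulli_signs n)" "\<beta> \<in> ?E" by blast
  have "(1 / 2) ^ n = measure_pmf.prob (bernoulli_signs n) {\<beta>}"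
    using pmf_bernoulli_signs[OF \<beta>(1)] by (simp add: measure_pmf_single)
  also have "\<dots> \<le> measure_pmf.prob (bernoulli_signs n) ?E"
    using \<beta>(2) by (intro measure_pmf.finite_measure_mono) auto
  finally show "(1 / 2) ^ n \<le> measure_pmf.prob (bernoulli_signs n) ?E" .
qed simp

end
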